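(* Let $\Gamma$ be a cocompact Fuchsian triangle group with signature $(m_1,m_2,m_3)$ and let $\mathcal{F}$ be a quadrilateral fundamental domain of $\Gamma$ of the form described in the context. If at least two of $m_1,m_2,m_3$ are odd, then the extension of every side of $\mathcal{F}$ (the full geodesic containing that side) intersects $\Gamma(\mathcal{F}^\circ)=\bigcup_{\gamma\in\Gamma}\gamma(\mathcal{F}^\circ)$.
   Context: $\mathbb{D}$ is the Poincaré disc with hyperbolic metric induced by $ds=2|dz|/(1-|z|^2)$. A cocompact Fuchsian triangle group with signature $(m_1,m_2,m_3)$, where $1/m_1+1/m_2+1/m_3<1$, is a cocompact discrete group of orientation-preserving isometries of $\mathbb{D}$ with presentation $\langle A,B:A^{m_1}=B^{m_2}=(AB)^{m_3}=I\rangle$. Its quadrilateral (convex) fundamental domain $\mathcal{F}$ has vertices $v_1,v_2,v_3,v_4$ with internal angles $\pi/m_3,2\pi/m_2,\pi/m_3,2\pi/m_1$ respectively; $r_i$ denotes the side meeting $v_i$ at its right (facing inward); the side-pairing generators $T_i\in\Gamma$ satisfy $T_1(r_1)=r_2$, $T_2(r_2)=r_1$, $T_3(r_3)=r_4$, $T_4(r_4)=r_3$, $T_1(v_1)=v_3$, $T_3(v_3)=v_1$, $T_2(v_2)=v_2$, $T_4(v_4)=v_4$, with $T_2T_1=T_1T_2=T_4T_3=T_3T_4=I$; the elliptic cycles are $\{v_1,v_3\}$, $\{v_2\}$, $\{v_4\}$ with stabiliser orders $m_3,m_2,m_1$. *)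

theory Defs
  imports "HOL-Analysis.Analysis"
begin

definition disc :: "complex set" where
  "disc = {z. cmod z < 1}"

text \<open>Orientation-preserving isometries of the disc: z maps to (a z + b)/(conj b z + conj a)
  with |a|^2 - |b|^2 = 1.  As HOL functions they act by this formula on the disc
  and (by convention) as the identity off the disc, so that composition of
  functions is the group law.\<close>
definition disc_aut :: "(complex \<Rightarrow> complex) \<Rightarrow> bool" where
  "disc_aut f \<longleftrightarrow> (\<exists>a b. (cmod a)^2 - (cmod b)^2 = 1 \<and>
      (\<forall>z. f z = (if z \<in> disc then (a * z + b) / (cnj b * z + cnj a) else z)))"

definition to0 :: "complex \<Rightarrow> complex \<Rightarrow> complex" where
  "to0 p z = (z - p) / (1 - cnj p * z)"

definition from0 :: "complex \<Rightarrow> complex \<Rightarrow> complex" where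
  "from0 p z = (z + p) / (1 + cnj p * z)"

definition hseg :: "complex \<Rightarrow> complex \<Rightarrow> complex set" where
  "hseg p q = {from0 p (complex_of_real t * to0 p q) | t. 0 \<le> t \<and> t \<le> 1}"

definition hline :: "complex \<Rightarrow> complex \<Rightarrow> complex set" where
  "hline p q = {from0 p (complex_of_real t * to0 p q) | t. cmod (complex_of_real t * to0 p q) < 1}"

text \<open>Hyperbolic angle at v between the geodesics from v to w1 and from v to w2
  (a value in [0, pi]); the model is conformal and to0 v has positive real derivative at v.\<close>
definition hangle :: "complex \<Rightarrow> complex \<Rightarrow> complex \<Rightarrow> real" where
  "hangle v w1 w2 = arccos (Re (to0 v w1 * cnj (to0 v w2)) / (cmod (to0 v w1) * cmod (to0 v w2)))"

definition hconvex :: "complex set \<Rightarrow> bool" where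
  "hconvex S \<longleftrightarrow> (\<forall>p\<in>S. \<forall>q\<in>S. hseg p q \<subseteq> S)"

definition disc_group :: "(complex \<Rightarrow> complex) set \<Rightarrow> bool" where
  "disc_group G \<longleftrightarrow> (\<forall>f\<in>G. disc_aut f) \<and> id \<in> G \<and> (\<forall>f\<in>G. \<forall>g\<in>G. f \<circ> g \<in> G)
     \<and> (\<forall>f\<in>G. \<exists>g\<in>G. g \<circ> f = id)"

text \<open>Fuchsian: discrete, equivalently acting properly discontinuously on the disc.\<close>
definition fuchsian :: "(complex \<Rightarrow> complex) set \<Rightarrow> bool" where
  "fuchsian G \<longleftrightarrow> disc_group G \<and>
     (\<forall>K. compact K \<and> K \<subseteq> disc \<longrightarrow> finite {g\<in>G. g ` K \<inter> K \<noteq> {}})"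

definition cocompact :: "(complex \<Rightarrow> complex) set \<Rightarrow> bool" where
  "cocompact G \<longleftrightarrow> (\<exists>K. compact K \<and> K \<subseteq> disc \<and> (\<Union>g\<in>G. g ` K) = disc)"

text \<open>The subgroup generated by A and B (the monoid generated suffices here as
  A and B have finite order, but we close under inverses anyway).\<close>
definition generated_by :: "(complex \<Rightarrow> complex) set \<Rightarrow> (complex \<Rightarrow> complex) \<Rightarrow> (complex \<Rightarrow> complex) \<Rightarrow> bool" where
  "generated_by G A B \<longleftrightarrow> A \<in> G \<and> B \<in> G \<and>
     (\<forall>S. A \<in> S \<and> B \<in> S \<and> id \<in> S \<and> (\<forall>f\<in>S. \<forall>g\<in>S. f \<circ> g \<in> S)
          \<and> (\<forall>f\<in>S. \<forall>g\<in>G. g \<circ> f = id \<longrightarrow> g \<in> S) \<longrightarrow> G \<subseteq> S)"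

definition fundamental_domain :: "(complex \<Rightarrow> complex) set \<Rightarrow> complex set \<Rightarrow> bool" where
  "fundamental_domain G F \<longleftrightarrow> F \<subseteq> disc \<and> closed F \<and> interior F \<noteq> {} \<and>
     (\<Union>g\<in>G. g ` F) = disc \<and>
     (\<forall>g\<in>G. g \<noteq> id \<longrightarrow> g ` (interior F) \<inter> interior F = {})"

end

theory Submission
  imports Defs
begin

text \<open>
  Everything is computed in the chart from0 c, which sends 0 to c and geodesics through c to
  diameters; there an elliptic element fixing c is multiplication by a unimodular number, and a
  stabiliser of order m consists of the rotations by all m-th roots of unity.

  Let c be a vertex with interior angle 2\<pi>/m, m odd, paired with itself by the rotation T
  through 2\<pi>/m. A small circle about c leaves F only through the two sides at c, and it meets
  the interior of F. It cannot do so on the long arc: that arc would then lie in the interior,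
  and T would map its point at angle \<pi> to its point at angle \<pi> + 2\<pi>/m, although the interior
  of F is disjoint from its translates. So the bisector of the angle enters the interior, and
  rotating it (m - 1)/2 or (m + 1)/2 times turns it into the continuation of a side beyond c.

  At a vertex with angle \<pi>/m whose stabiliser has odd order m, the rotation through
  \<pi> + \<pi>/m has order dividing m, hence lies in the stabiliser, and it carries the line of
  one side onto the line of the other. When two of m1, m2, m3 are odd, these two arguments
  together reach all four sides.
\<close>

section \<open>Charts centred at a point\<close>

lemma from0_denom_identity:
  "(cmod (1 + cnj p * z))^2 - (cmod (z + p))^2 = (1 - (cmod p)^2) * (1 - (cmod z)^2)"
  unfolding cmod_power2 by (simp add: algebra_simps power2_eq_square)

lemma cmod_cnj_mult_less_1: "cmod p < 1 \<Longrightarrow> cmod z < 1 \<Longrightarrow> cmod (cnj p * z) < 1"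
  by (simp add: norm_mult) (metis mult_strict_mono' norm_ge_zero mult_1_left)

lemma from0_denom_nonzero: "cmod p < 1 \<Longrightarrow> cmod z < 1 \<Longrightarrow> 1 + cnj p * z \<noteq> 0"
  using cmod_cnj_mult_less_1[of p z] by (auto simp: add_eq_0_iff)

lemma to0_denom_nonzero: "cmod p < 1 \<Longrightarrow> cmod z < 1 \<Longrightarrow> 1 - cnj p * z \<noteq> 0"
  using from0_denom_nonzero[of "-p" z] by simp

lemma to0_eq_from0_minus: "to0 p = from0 (-p)"
  by (simp add: fun_eq_iff to0_def from0_def)

lemma from0_center [simp]: "from0 p 0 = p"
  by (simp add: from0_def)

lemma from0_in_disc: assumes "cmod p < 1" "cmod z < 1" shows "cmod (from0 p z) < 1"
proof -
  have "(1 - (cmod p)^2) * (1 - (cmod z)^2) > 0"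
    using assms by (intro mult_pos_pos) (simp_all add: abs_square_less_1)
  then have "(cmod (z + p))^2 < (cmod (1 + cnj p * z))^2"
    using from0_denom_identity[of p z] by linarith
  then have "cmod (z + p) < cmod (1 + cnj p * z)" by (simp add: power2_less_imp_less)
  then show ?thesis using from0_denom_nonzero[OF assms]
    by (simp add: from0_def norm_divide divide_less_eq)
qed

lemma to0_in_disc: "cmod p < 1 \<Longrightarrow> cmod z < 1 \<Longrightarrow> cmod (to0 p z) < 1"
  by (simp add: to0_eq_from0_minus from0_in_disc)

lemma cmod_scale_less_1:
  assumes "0 \<le> t" "t \<le> 1" "cmod w < 1" shows "cmod (complex_of_real t * w) < 1"
proof -
  have "cmod (complex_of_real t * w) = t * cmod w" using assms(1) by (simp add: norm_mult)
  also have "\<dots> \<le> cmod w" using assms(1,2) by (simp add: mult_left_le_one_le)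
  finally show ?thesis using assms(3) by simp
qed

lemma moebius_of_quotient:
  "(d::complex) \<noteq> 0 \<Longrightarrow> (a/d - p) / (1 - q * (a/d)) = (a - p*d) / (d - q*a)"
proof -
  assume d: "d \<noteq> 0"
  have "a/d - p = (a - p*d) / d" "1 - q * (a/d) = (d - q*a) / d"
    using d by (simp_all add: field_simps)
  then show ?thesis using d by simp
qed

lemma to0_from0_cancel: assumes "cmod p < 1" "cmod z < 1" shows "to0 p (from0 p z) = z"
proof -
  have "1 - cnj p * p \<noteq> 0" using cmod_cnj_mult_less_1[of p p] assms(1) by auto
  have "to0 p (from0 p z) = (z + p - p * (1 + cnj p * z)) / (1 + cnj p * z - cnj p * (z + p))"
    unfolding to0_def from0_def using moebius_of_quotient[OF from0_denom_nonzero[OF assms]] by simp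
  also have "\<dots> = (z * (1 - cnj p * p)) / (1 - cnj p * p)" by (simp add: algebra_simps)
  finally show ?thesis using \<open>1 - cnj p * p \<noteq> 0\<close> by simp
qed

lemma from0_to0_cancel: "cmod p < 1 \<Longrightarrow> cmod z < 1 \<Longrightarrow> from0 p (to0 p z) = z"
  using to0_from0_cancel[of "-p" z] by (simp add: to0_eq_from0_minus fun_eq_iff from0_def)

lemma to0_from0_comp:
  assumes c: "cmod c < 1" and p: "cmod p < 1" and z: "cmod z < 1"
  shows "to0 c (from0 p z) = from0 (to0 c p) (((1 - c * cnj p) / (1 - cnj c * p)) * z)"
proof -
  have d1: "1 - cnj c * p \<noteq> 0" using to0_denom_nonzero c p .
  have d2: "1 - c * cnj p \<noteq> 0" using to0_denom_nonzero[OF p c] by (simp add: mult.commute)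
  define N where "N = (1 - c * cnj p) * z + (p - c)"
  define D where "D = (1 - cnj c * p) + (cnj p - cnj c) * z"
  have "to0 c (from0 p z) = ((z + p) - c * (1 + cnj p * z)) / ((1 + cnj p * z) - cnj c * (z + p))"
    unfolding to0_def from0_def using moebius_of_quotient[OF from0_denom_nonzero[OF p z]] by simp
  also have "\<dots> = N / D" unfolding N_def D_def by (simp add: algebra_simps)
  finally have lhs: "to0 c (from0 p z) = N / D" .
  have num: "((1 - c * cnj p) / (1 - cnj c * p)) * z + to0 c p = N / (1 - cnj c * p)"
    unfolding to0_def N_def by (simp add: add_divide_distrib)
  have "cnj (to0 c p) * (((1 - c * cnj p) / (1 - cnj c * p)) * z)
      = ((cnj p - cnj c) * z) / (1 - cnj c * p)"
    using d2 by (simp add: to0_def)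
  then have den: "1 + cnj (to0 c p) * (((1 - c * cnj p) / (1 - cnj c * p)) * z) = D / (1 - cnj c * p)"
    unfolding D_def using d1 by (simp add: add_divide_distrib)
  show ?thesis unfolding lhs unfolding from0_def num den using d1 by simp
qed

lemma cmod_cnj_ratio: "1 - cnj c * p \<noteq> 0 \<Longrightarrow> cmod ((1 - c * cnj p) / (1 - cnj c * p)) = 1"
proof -
  assume "1 - cnj c * p \<noteq> 0"
  moreover have "cmod (1 - c * cnj p) = cmod (1 - cnj c * p)"
    by (metis complex_cnj_cnj complex_cnj_diff complex_cnj_mult complex_cnj_one complex_mod_cnj)
  ultimately show ?thesis by (simp add: norm_divide)
qed

lemma unit_mult_cnj: "cmod k = 1 \<Longrightarrow> k * cnj k = 1"
  by (simp add: complex_norm_square[symmetric])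

lemma cnj_mult_self: "cnj v * v = complex_of_real ((cmod v)^2)"
  by (metis complex_norm_square mult.commute)

lemma from0_rotate: assumes "cmod k = 1" shows "k * from0 (cnj k * c) y = from0 c (k * y)"
proof -
  have "k * from0 (cnj k * c) y = (k * y + (k * cnj k) * c) / (1 + k * cnj c * y)"
    unfolding from0_def by (simp add: algebra_simps)
  then show ?thesis unfolding unit_mult_cnj[OF assms] from0_def by (simp add: algebra_simps)
qed

lemma from0_continuous_on: "cmod c < 1 \<Longrightarrow> continuous_on (ball 0 1) (from0 c)"
  unfolding from0_def using from0_denom_nonzero by (intro continuous_intros) auto

lemma from0_homeomorphism:
  assumes c: "cmod c < 1" shows "homeomorphism (ball 0 1) (ball 0 1) (from0 c) (to0 c)"
proof
  show "continuous_on (ball 0 1) (from0 c)" using from0_continuous_on[OF c] .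
  show "continuous_on (ball 0 1) (to0 c)"
    unfolding to0_eq_from0_minus using from0_continuous_on c by simp
qed (use c from0_in_disc to0_in_disc to0_from0_cancel from0_to0_cancel in auto)

section \<open>Rotations about a point\<close>

definition rotation_about :: "complex \<Rightarrow> complex \<Rightarrow> (complex \<Rightarrow> complex) \<Rightarrow> bool" where
  "rotation_about c \<omega> g \<longleftrightarrow>
     cmod \<omega> = 1 \<and> (\<forall>w. cmod w < 1 \<longrightarrow> g (from0 c w) = from0 c (\<omega> * w))"

lemma disc_aut_eq_unit_mult_from0:
  assumes "disc_aut g"
  obtains k d where "cmod k = 1" "cmod d < 1" "\<And>z. cmod z < 1 \<Longrightarrow> g z = k * from0 d z"
proof -
  obtain a b where ab: "(cmod a)^2 - (cmod b)^2 = 1"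
    and g: "\<And>z. g z = (if z \<in> disc then (a * z + b) / (cnj b * z + cnj a) else z)"
    using assms unfolding disc_aut_def by blast
  have "cmod b < cmod a" using ab by (simp add: power2_less_imp_less)
  then have a0: "a \<noteq> 0" and d: "cmod (b / a) < 1" by (auto simp: norm_divide divide_less_eq)
  show ?thesis
  proof (rule that[OF _ d])
    show "cmod (a / cnj a) = 1" using a0 by (simp add: norm_divide)
    fix z :: complex assume "cmod z < 1"
    moreover have "z + b / a = (a * z + b) / a" "1 + cnj (b / a) * z = (cnj b * z + cnj a) / cnj a"
      using a0 by (simp_all add: field_simps)
    ultimately show "g z = (a / cnj a) * from0 (b / a) z" using a0 by (simp add: g disc_def from0_def)
  qed
qed

lemma disc_aut_fixing_rotation:
  assumes g: "disc_aut g" and c: "cmod c < 1" and gc: "g c = c"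
  obtains \<omega> where "rotation_about c \<omega> g"
proof -
  obtain k d where k: "cmod k = 1" and d: "cmod d < 1"
    and gk: "\<And>z. cmod z < 1 \<Longrightarrow> g z = k * from0 d z"
    using disc_aut_eq_unit_mult_from0[OF g] by blast
  have from0_d: "from0 d = to0 (-d)" by (simp add: to0_eq_from0_minus)
  define \<kappa> where "\<kappa> = (1 - (-d) * cnj c) / (1 - cnj (-d) * c)"
  have \<kappa>: "cmod \<kappa> = 1"
    unfolding \<kappa>_def using cmod_cnj_ratio[OF to0_denom_nonzero[of "-d" c]] c d by simp
  have "cnj k * (k * to0 (-d) c) = cnj k * c" using gk[OF c] gc by (simp add: from0_d)
  then have dc: "to0 (-d) c = cnj k * c" using unit_mult_cnj[OF k] by (simp add: mult.assoc[symmetric] mult.commute)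
  have "g (from0 c w) = from0 c (k * \<kappa> * w)" if w: "cmod w < 1" for w
  proof -
    have "g (from0 c w) = k * to0 (-d) (from0 c w)" using gk from0_in_disc[OF c w] by (simp add: from0_d)
    also have "\<dots> = k * from0 (cnj k * c) (\<kappa> * w)"
      using to0_from0_comp[of "-d" c w] d c w by (simp add: \<kappa>_def dc)
    also have "\<dots> = from0 c (k * \<kappa> * w)" using from0_rotate[OF k] by (simp add: mult.assoc)
    finally show ?thesis .
  qed
  then have "rotation_about c (k * \<kappa>) g" using k \<kappa> by (simp add: rotation_about_def norm_mult)
  then show ?thesis by (rule that)
qed

lemma rotation_about_apply:
  assumes "rotation_about c \<omega> T" "cmod c < 1" "cmod q < 1"
  shows "T q = from0 c (\<omega> * to0 c q)"
  using assms from0_to0_cancel[of c q] to0_in_disc[of c q] unfolding rotation_about_def by metis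

lemma rotation_about_unique:
  assumes "cmod c < 1" "rotation_about c a g" "rotation_about c b g"
  shows "a = b"
proof -
  have half: "cmod (1/2 :: complex) < 1" by simp
  have "g (from0 c (1/2)) = from0 c (a * (1/2))" using assms(2) half by (simp add: rotation_about_def)
  moreover have "g (from0 c (1/2)) = from0 c (b * (1/2))" using assms(3) half by (simp add: rotation_about_def)
  ultimately have "from0 c (a * (1/2)) = from0 c (b * (1/2))" by simp
  then have "to0 c (from0 c (a * (1/2))) = to0 c (from0 c (b * (1/2)))" by simp
  then show "a = b" using to0_from0_cancel assms unfolding rotation_about_def by (simp add: norm_mult)
qed

lemma rotation_about_ne_id:
  assumes "cmod c < 1" "rotation_about c \<omega> T" "\<omega> \<noteq> 1"
  shows "T \<noteq> id"
proof
  assume "T = id"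
  then have "rotation_about c 1 T" by (simp add: rotation_about_def)
  then show False using rotation_about_unique[OF assms(1,2)] assms(3) by blast
qed

lemma rotation_about_determines_disc_aut:
  assumes g: "disc_aut g" and h: "disc_aut h" and c: "cmod c < 1"
    and "rotation_about c \<omega> g" "rotation_about c \<omega> h"
  shows "g = h"
proof
  fix x show "g x = h x"
  proof (cases "cmod x < 1")
    case True
    define w where "w = to0 c x"
    have x: "x = from0 c w" and w: "cmod w < 1"
      unfolding w_def using from0_to0_cancel to0_in_disc c True by auto
    have "g (from0 c w) = from0 c (\<omega> * w)" "h (from0 c w) = from0 c (\<omega> * w)"
      using assms(4,5) w unfolding rotation_about_def by simp_all
    then show ?thesis using x by simp
  next
    case False
    then show ?thesis using g h by (auto simp: disc_aut_def disc_def)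
  qed
qed

lemma rotation_about_comp:
  "rotation_about c a g \<Longrightarrow> rotation_about c b h \<Longrightarrow> rotation_about c (a * b) (g \<circ> h)"
  unfolding rotation_about_def by (simp add: norm_mult mult.assoc)

lemma rotation_about_funpow:
  assumes "rotation_about c a g" shows "rotation_about c (a ^ n) (g ^^ n)"
proof (induction n)
  case 0
  then show ?case by (simp add: rotation_about_def)
next
  case (Suc n)
  have "rotation_about c (a * a ^ n) (g \<circ> g ^^ n)" by (rule rotation_about_comp[OF assms Suc.IH])
  then show ?case by (simp only: funpow.simps(2) power_Suc)
qed

lemma disc_group_funpow: assumes "disc_group G" "T \<in> G" shows "T ^^ n \<in> G"
proof (induction n)
  case 0
  then show ?case using assms(1) unfolding disc_group_def by (simp add: id_def)
next
  case (Suc n)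
  then show ?case using assms unfolding disc_group_def funpow.simps(2) by blast
qed

lemma mult_closed_eq_roots_of_unity:
  fixes H :: "complex set"
  assumes fin: "finite H" and H0: "0 \<notin> H"
    and mult: "\<And>x y. x \<in> H \<Longrightarrow> y \<in> H \<Longrightarrow> x * y \<in> H"
    and card: "card H = m" and m: "m \<ge> 1"
  shows "H = {z. z ^ m = 1}"
proof (rule card_subset_eq)
  show "finite {z::complex. z ^ m = 1}" using m by (intro finite_roots_unity) auto
  show "card H = card {z::complex. z ^ m = 1}" using card card_roots_unity_eq[of m] m by simp
  show "H \<subseteq> {z. z ^ m = 1}"
  proof
    fix \<omega> assume \<omega>: "\<omega> \<in> H"
    have inj: "inj_on ((*) \<omega>) H" using \<omega> H0 by (auto intro: inj_onI)
    have "(*) \<omega> ` H = H"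
      using card_subset_eq[OF fin] card_image[OF inj] mult[OF \<omega>] by blast
    then have "prod id H = prod ((*) \<omega>) H" using prod.reindex[OF inj] by simp
    also have "\<dots> = \<omega> ^ m * prod id H" using card by (simp add: prod.distrib)
    finally have "1 * prod id H = \<omega> ^ m * prod id H" by simp
    moreover have "prod id H \<noteq> 0" using fin H0 by (simp add: prod_zero_iff)
    ultimately show "\<omega> \<in> {z. z ^ m = 1}" by (metis mult_cancel_right mem_Collect_eq)
  qed
qed

lemma stabiliser_contains_rotation:
  assumes G: "disc_group G" and c: "cmod c < 1" and card: "card {g\<in>G. g c = c} = m"
    and m: "m \<ge> 1" and z: "z ^ m = 1"
  shows "\<exists>g\<in>G. rotation_about c z g"
proof -
  define S where "S = {g\<in>G. g c = c}"
  define f where "f g = (SOME \<omega>. rotation_about c \<omega> g)" for g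
  have aut: "disc_aut g" if "g \<in> S" for g using G that unfolding disc_group_def S_def by blast
  have rot: "rotation_about c (f g) g" if g: "g \<in> S" for g
  proof -
    obtain \<omega> where "rotation_about c \<omega> g"
      using disc_aut_fixing_rotation[OF aut[OF g] c] g unfolding S_def by blast
    then show ?thesis unfolding f_def by (rule someI)
  qed
  have fin: "finite S" using card m unfolding S_def by (metis card.infinite not_one_le_zero)
  have inj: "inj_on f S"
  proof (rule inj_onI)
    fix g h assume g: "g \<in> S" and h: "h \<in> S" and "f g = f h"
    then show "g = h" using rotation_about_determines_disc_aut[OF aut[OF g] aut[OF h] c rot[OF g]] rot[OF h] by simp
  qed
  have "f ` S = {z. z ^ m = 1}"
  proof (rule mult_closed_eq_roots_of_unity)
    show "finite (f ` S)" using fin by simp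
    show "0 \<notin> f ` S" using rot unfolding rotation_about_def by fastforce
    show "card (f ` S) = m" using card_image[OF inj] card S_def by simp
    show "m \<ge> 1" by (rule m)
    fix x y assume "x \<in> f ` S" "y \<in> f ` S"
    then obtain g h where g: "g \<in> S" "x = f g" and h: "h \<in> S" "y = f h" by blast
    have gh: "g \<circ> h \<in> S" using g h G unfolding S_def disc_group_def by auto
    have "x * y = f (g \<circ> h)"
      using rotation_about_unique[OF c rotation_about_comp[OF rot[OF g(1)] rot[OF h(1)]] rot[OF gh]] g h
      by simp
    then show "x * y \<in> f ` S" using gh by blast
  qed
  then obtain g where "g \<in> S" "z = f g" using z by blast
  then show ?thesis using rot unfolding S_def by blast
qed

section \<open>Geodesic segments and lines\<close>

lemma to0_swap:
  assumes "cmod p < 1" "cmod q < 1"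
  shows "((1 - p * cnj q) / (1 - cnj p * q)) * to0 q p = - to0 p q"
proof -
  have "1 - p * cnj q \<noteq> 0" using to0_denom_nonzero[of q p] assms by (simp add: mult.commute)
  then show ?thesis by (simp add: to0_def mult.commute minus_divide_left)
qed

lemma from0_scaled_minus_self:
  "from0 v (complex_of_real (- t) * v) = complex_of_real ((1 - t) / (1 - t * (cmod v)^2)) * v"
proof -
  have "from0 v (complex_of_real (- t) * v) = ((1 - t) * v) / (1 - t * (cnj v * v))"
    unfolding from0_def by (simp add: algebra_simps)
  also have "\<dots> = ((1 - t) * v) / complex_of_real (1 - t * (cmod v)^2)"
    unfolding cnj_mult_self by simp
  also have "\<dots> = complex_of_real ((1 - t) / (1 - t * (cmod v)^2)) * v"
    by (simp add: field_simps)
  finally show ?thesis .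
qed

lemma from0_reverse:
  assumes p: "cmod p < 1" and q: "cmod q < 1" and t: "cmod (complex_of_real t * to0 q p) < 1"
  defines "r \<equiv> (1 - t) / (1 - t * (cmod (to0 p q))^2)"
  shows "to0 p (from0 q (complex_of_real t * to0 q p)) = complex_of_real r * to0 p q"
    and "from0 q (complex_of_real t * to0 q p) = from0 p (complex_of_real r * to0 p q)"
proof -
  let ?x = "from0 q (complex_of_real t * to0 q p)"
  have "((1 - p * cnj q) / (1 - cnj p * q)) * (complex_of_real t * to0 q p)
      = complex_of_real t * (((1 - p * cnj q) / (1 - cnj p * q)) * to0 q p)"
    by (simp add: ac_simps)
  also have "\<dots> = complex_of_real (- t) * to0 p q" using to0_swap[OF p q] by simp
  finally have "((1 - p * cnj q) / (1 - cnj p * q)) * (complex_of_real t * to0 q p)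
      = complex_of_real (- t) * to0 p q" .
  then show e: "to0 p ?x = complex_of_real r * to0 p q"
    using to0_from0_comp[OF p q t] from0_scaled_minus_self unfolding r_def by simp
  have "cmod ?x < 1" using from0_in_disc q t .
  then show "?x = from0 p (complex_of_real r * to0 p q)" using from0_to0_cancel[OF p] e by metis
qed

lemma hseg_subset_commute:
  assumes p: "cmod p < 1" and q: "cmod q < 1" shows "hseg q p \<subseteq> hseg p q"
proof
  fix x assume "x \<in> hseg q p"
  then obtain t where t: "0 \<le> t" "t \<le> 1" and x: "x = from0 q (complex_of_real t * to0 q p)"
    unfolding hseg_def by blast
  define k where "k = (cmod (to0 p q))^2"
  have k: "0 \<le> k" "k < 1" unfolding k_def using to0_in_disc[OF p q] by (simp_all add: abs_square_less_1)
  have "t * k \<le> t" "t * k \<le> k" using k t by (simp_all add: mult_left_le mult_left_le_one_le)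
  then have "t * k \<le> t" "t * k < 1" using k by linarith+
  then have "0 \<le> (1 - t) / (1 - t * k)" "(1 - t) / (1 - t * k) \<le> 1"
    using t by (simp_all add: divide_le_eq_1)
  moreover have "x = from0 p (complex_of_real ((1 - t) / (1 - t * k)) * to0 p q)"
    unfolding x k_def using from0_reverse(2)[OF p q cmod_scale_less_1[OF t to0_in_disc[OF q p]]] .
  ultimately show "x \<in> hseg p q" unfolding hseg_def by blast
qed

lemma hseg_commute: "cmod p < 1 \<Longrightarrow> cmod q < 1 \<Longrightarrow> hseg p q = hseg q p"
  using hseg_subset_commute by blast

lemma hline_subset_commute:
  assumes p: "cmod p < 1" and q: "cmod q < 1" shows "hline q p \<subseteq> hline p q"
proof
  fix x assume "x \<in> hline q p"
  then obtain t where t: "cmod (complex_of_real t * to0 q p) < 1"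
    and x: "x = from0 q (complex_of_real t * to0 q p)"
    unfolding hline_def by blast
  define r where "r = (1 - t) / (1 - t * (cmod (to0 p q))^2)"
  have "cmod (to0 p x) < 1" using x from0_in_disc[OF q t] to0_in_disc[OF p] by simp
  then have "cmod (complex_of_real r * to0 p q) < 1" using from0_reverse(1)[OF p q t] x r_def by simp
  moreover have "x = from0 p (complex_of_real r * to0 p q)" using from0_reverse(2)[OF p q t] x r_def by simp
  ultimately show "x \<in> hline p q" unfolding hline_def by blast
qed

lemma hline_commute: "cmod p < 1 \<Longrightarrow> cmod q < 1 \<Longrightarrow> hline p q = hline q p"
  using hline_subset_commute by blast

lemma from0_mem_hseg_iff:
  assumes c: "cmod c < 1" and w: "cmod w < 1" and z: "cmod z < 1"
  shows "from0 c z \<in> hseg c (from0 c w) \<longleftrightarrow>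
    (\<exists>t. 0 \<le> t \<and> t \<le> 1 \<and> z = complex_of_real t * w)"
proof -
  have "from0 c z = from0 c y \<longleftrightarrow> z = y" if "cmod y < 1" for y
    using to0_from0_cancel[OF c] z that by metis
  then show ?thesis unfolding hseg_def to0_from0_cancel[OF c w] using cmod_scale_less_1[OF _ _ w] by blast
qed

lemma closed_hseg: assumes p: "cmod p < 1" and q: "cmod q < 1" shows "closed (hseg p q)"
proof -
  have sub: "(\<lambda>t. complex_of_real t * to0 p q) ` {0..1} \<subseteq> ball 0 1"
    using cmod_scale_less_1[OF _ _ to0_in_disc[OF p q]] by auto
  have "continuous_on {0..1} (\<lambda>t. from0 p (complex_of_real t * to0 p q))"
    by (rule continuous_on_compose2[OF from0_continuous_on[OF p] _ sub]) (intro continuous_intros)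
  moreover have "hseg p q = (\<lambda>t. from0 p (complex_of_real t * to0 p q)) ` {0..1}"
    unfolding hseg_def by auto
  ultimately show ?thesis by (metis compact_Icc compact_continuous_image compact_imp_closed)
qed

section \<open>Angles\<close>

lemma cis_sign_pi: "sg = 1 \<or> sg = (-1::real) \<Longrightarrow> cis (sg * pi) = -1"
  by (auto simp: complex_eq_iff)

lemma cis_eq_nonneg_real_imp_zero:
  assumes "cis x = complex_of_real r" "0 \<le> r" "\<bar>x\<bar> < 2 * pi"
  shows "x = 0"
proof -
  have "sin x = 0" "cos x \<ge> 0" using arg_cong[OF assms(1), of Im] arg_cong[OF assms(1), of Re] assms(2)
    by simp_all
  then have "cos x = 1" using sin_cos_squared_add[of x] by (simp add: power2_eq_1_iff abs_if)
  then obtain n :: int where n: "x = real_of_int n * 2 * pi" using cos_one_2pi_int by meson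
  then have "\<bar>real_of_int n\<bar> < 1" using assms(3) by (simp add: abs_mult)
  then show ?thesis using n by simp
qed

lemma unit_eq_cis_sign:
  assumes "cmod z = 1" "Re z = cos a"
  obtains sg :: real where "sg = 1 \<or> sg = -1" "z = cis (sg * a)"
proof -
  have "(cos a)^2 + (Im z)^2 = 1" using assms cmod_power2[of z] by simp
  then have "(Im z)^2 = (sin a)^2" using sin_cos_squared_add[of a] by linarith
  then have "Im z = sin a \<or> Im z = sin (- 1 * a)" by (simp add: power2_eq_iff)
  then show ?thesis
  proof
    assume "Im z = sin a"
    then show ?thesis using that[of 1] assms(2) by (simp add: complex_eq_iff)
  next
    assume "Im z = sin (- 1 * a)"
    then show ?thesis using that[of "-1"] assms(2) by (simp add: complex_eq_iff)
  qed
qed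

lemma unit_eq_cis_param:
  assumes "cmod v = 1" "sg = 1 \<or> sg = (-1::real)"
  obtains t where "0 \<le> t" "t < 2 * pi" "v = cis (sg * t)"
proof -
  have "v \<noteq> 0" using assms(1) by auto
  then have v: "v = cis (Arg v)" using assms(1) cis_Arg[of v] by (simp add: sgn_div_norm)
  have "- pi < Arg v" "Arg v \<le> pi" using Arg_bounded by auto
  moreover have "cis (sg * (sg * Arg v + 2 * pi)) = cis (Arg v)"
    using assms(2) by (auto simp: algebra_simps cis_mult[symmetric] cis_divide[symmetric] complex_eq_iff)
  ultimately show ?thesis using that[of "sg * Arg v"] that[of "sg * Arg v + 2 * pi"] v assms(2)
    by (cases "0 \<le> sg * Arg v") auto
qed

lemma hangle_commute: "hangle v a b = hangle v b a"
  unfolding hangle_def by (simp add: mult.commute)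

lemma hangle_degenerate: "to0 c p = 0 \<or> to0 c q = 0 \<Longrightarrow> hangle c p q = pi / 2"
  unfolding hangle_def by auto

lemma hangle_mem_hseg:
  assumes p: "cmod p < 1" and q: "cmod q < 1" and x: "x \<in> hseg p q" and xp: "x \<noteq> p"
  shows "hangle p q x = 0"
proof -
  obtain t where t: "0 \<le> t" "t \<le> 1" and xt: "x = from0 p (complex_of_real t * to0 p q)"
    using x unfolding hseg_def by blast
  define v where "v = to0 p q"
  have "to0 p x = complex_of_real t * v"
    unfolding xt v_def using to0_from0_cancel[OF p cmod_scale_less_1[OF t to0_in_disc[OF p q]]] .
  moreover have "t > 0" "v \<noteq> 0" using xp t unfolding xt v_def by (auto simp: less_le)
  moreover have "Re (v * cnj (complex_of_real t * v)) = t * (cmod v)^2"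
    unfolding cmod_power2 by (simp add: power2_eq_square algebra_simps)
  ultimately show ?thesis unfolding hangle_def v_def[symmetric] by (simp add: norm_mult power2_eq_square)
qed

lemma hangle_cos:
  "Re (to0 c p * cnj (to0 c q)) / (cmod (to0 c p) * cmod (to0 c q)) = cos (hangle c p q)"
proof -
  have "\<bar>Re (to0 c p * cnj (to0 c q))\<bar> \<le> cmod (to0 c p) * cmod (to0 c q)"
    using abs_Re_le_cmod[of "to0 c p * cnj (to0 c q)"] by (simp add: norm_mult)
  then have "\<bar>Re (to0 c p * cnj (to0 c q)) / (cmod (to0 c p) * cmod (to0 c q))\<bar> \<le> 1"
    by (cases "cmod (to0 c p) * cmod (to0 c q) = 0") (simp_all add: abs_divide divide_le_eq)
  then show ?thesis unfolding hangle_def by (simp add: cos_arccos_abs)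
qed

text \<open>Since hangle is unoriented, a direction is determined by it only up to the sign sg.\<close>

lemma hangle_direction:
  assumes a: "to0 c p \<noteq> 0" and b: "to0 c q \<noteq> 0"
  obtains sg :: real where "sg = 1 \<or> sg = -1"
    "to0 c q = complex_of_real (cmod (to0 c q) / cmod (to0 c p)) * cis (sg * hangle c p q) * to0 c p"
proof -
  define e where "e = to0 c q * cnj (to0 c p) / complex_of_real (cmod (to0 c p) * cmod (to0 c q))"
  have "cmod e = 1" unfolding e_def using a b by (simp add: norm_mult norm_divide)
  moreover have "Re e = cos (hangle c p q)"
    unfolding e_def hangle_cos[symmetric] by (simp add: Re_divide_of_real mult.commute)
  ultimately obtain sg :: real where sg: "sg = 1 \<or> sg = -1" "e = cis (sg * hangle c p q)"
    by (rule unit_eq_cis_sign)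
  have "complex_of_real (cmod (to0 c q) / cmod (to0 c p)) * e * to0 c p
      = to0 c q * (cnj (to0 c p) * to0 c p) / complex_of_real ((cmod (to0 c p))^2)"
    unfolding e_def using a b by (simp add: field_simps power2_eq_square)
  also have "\<dots> = to0 c q" using a unfolding cnj_mult_self by simp
  finally have "to0 c q = complex_of_real (cmod (to0 c q) / cmod (to0 c p)) * e * to0 c p" by simp
  then show ?thesis using that sg by simp
qed

lemma rotation_about_eq_cis_hangle:
  assumes rot: "rotation_about c \<omega> T" and c: "cmod c < 1" and q: "cmod q < 1" and qc: "q \<noteq> c"
  obtains sg :: real where "sg = 1 \<or> sg = -1" "\<omega> = cis (sg * hangle c q (T q))"
proof -
  have "to0 c q \<noteq> 0" using from0_to0_cancel[OF c q] qc by force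
  moreover have Tq: "to0 c (T q) = \<omega> * to0 c q" and "cmod \<omega> = 1"
    using rotation_about_apply[OF rot c q] rot to0_from0_cancel[OF c] to0_in_disc[OF c q]
    by (simp_all add: rotation_about_def norm_mult)
  ultimately obtain sg :: real where "sg = 1 \<or> sg = -1"
    "to0 c (T q) = complex_of_real (cmod (to0 c (T q)) / cmod (to0 c q)) * cis (sg * hangle c q (T q)) * to0 c q"
    using hangle_direction by (metis mult_eq_0_iff norm_eq_zero zero_neq_one)
  then show ?thesis using that \<open>to0 c q \<noteq> 0\<close> \<open>cmod \<omega> = 1\<close> unfolding Tq by (simp add: norm_mult)
qed

lemma from0_cis_mem_hseg_imp_eq:
  assumes c: "cmod c < 1" and u: "cmod u < 1" "u \<noteq> 0" and s: "0 < s" "s \<le> 1"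
    and mem: "from0 c (complex_of_real s * cis x * u) \<in> hseg c (from0 c (cis y * u))"
    and xy: "\<bar>x - y\<bar> < 2 * pi"
  shows "x = y"
proof -
  have "cmod (cis y * u) < 1" using u by (simp add: norm_mult)
  moreover have "cmod (complex_of_real s * cis x * u) < 1"
    using u cmod_scale_less_1[of s "cis x * u"] s by (simp add: norm_mult mult.assoc)
  ultimately obtain \<tau> where \<tau>: "0 \<le> \<tau>"
    and e: "complex_of_real s * cis x * u = complex_of_real \<tau> * (cis y * u)"
    using from0_mem_hseg_iff[OF c] mem by blast
  then have "cis x * complex_of_real s = complex_of_real \<tau> * cis y" using u by (simp add: ac_simps)
  then have "cis x / cis y = complex_of_real \<tau> / complex_of_real s"
    using s by (simp add: divide_eq_eq eq_divide_eq)
  then have "cis (x - y) = complex_of_real (\<tau> / s)" by (simp add: cis_divide)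
  then show ?thesis using cis_eq_nonneg_real_imp_zero[of "x - y" "\<tau> / s"] \<tau> s xy by simp
qed

lemma from0_circle_not_mem_sides:
  assumes c: "cmod c < 1" and u: "cmod u < 1" "u \<noteq> 0" and s: "0 < s" "s \<le> 1"
    and sg: "sg = 1 \<or> sg = -1" and \<alpha>: "0 < \<alpha>" "\<alpha> < pi" and t: "0 < t" "t < 2 * pi" "t \<noteq> \<alpha>"
  shows "from0 c (complex_of_real s * cis (sg * t) * u)
    \<notin> hseg c (from0 c u) \<union> hseg c (from0 c (cis (sg * \<alpha>) * u))"
proof -
  have "from0 c (complex_of_real s * cis (sg * t) * u) \<notin> hseg c (from0 c (cis (sg * 0) * u))"
    using from0_cis_mem_hseg_imp_eq[OF c u s, of "sg * t" "sg * 0"] sg t by auto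
  moreover have "\<bar>sg * t - sg * \<alpha>\<bar> < 2 * pi" using sg t \<alpha> by (auto simp: abs_if)
  then have "from0 c (complex_of_real s * cis (sg * t) * u) \<notin> hseg c (from0 c (cis (sg * \<alpha>) * u))"
    using from0_cis_mem_hseg_imp_eq[OF c u s, of "sg * t" "sg * \<alpha>"] sg t by auto
  ultimately show ?thesis by simp
qed

section \<open>Interiors of convex sets\<close>

lemma hconvex_interior_radial:
  assumes cvx: "hconvex F" and cF: "c \<in> F" and c: "cmod c < 1" and w: "cmod w < 1"
    and wF: "from0 c w \<in> interior F" and r: "0 < r" "r \<le> 1"
  shows "from0 c (complex_of_real r * w) \<in> interior F"
proof -
  define V where "V = ball 0 1 \<inter> from0 c -` interior F"
  define W where "W = from0 c ` ((\<lambda>x. r *\<^sub>R x) ` V)"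
  have "open V" unfolding V_def by (rule continuous_open_preimage[OF from0_continuous_on[OF c]]) auto
  then have "open ((\<lambda>x. r *\<^sub>R x) ` V)" using r by (intro open_scaling) auto
  moreover have "(\<lambda>x. r *\<^sub>R x) ` V \<subseteq> ball 0 1"
    using cmod_scale_less_1[OF less_imp_le[OF r(1)] r(2)] by (auto simp: V_def scaleR_conv_of_real)
  ultimately have "open W"
    unfolding W_def using homeomorphism_imp_open_map[OF from0_homeomorphism[OF c]]
    by (metis open_ball openin_open_trans openin_subopen open_subset)
  moreover have "W \<subseteq> F"
  proof
    fix y assume "y \<in> W"
    then obtain x where x: "x \<in> V" and y: "y = from0 c (complex_of_real r * x)"
      unfolding W_def by (auto simp: scaleR_conv_of_real)
    have xn: "cmod x < 1" using x by (simp add: V_def)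
    have "hseg c (from0 c x) \<subseteq> F" using cvx cF x interior_subset unfolding hconvex_def V_def by blast
    moreover have "y \<in> hseg c (from0 c x)"
      unfolding y using from0_mem_hseg_iff[OF c xn cmod_scale_less_1[OF _ r(2) xn]] r by auto
    ultimately show "y \<in> F" by blast
  qed
  moreover have "w \<in> V" using w wF by (simp add: V_def)
  then have "from0 c (complex_of_real r * w) \<in> W"
    unfolding W_def by (intro imageI) (simp add: image_iff scaleR_conv_of_real, blast)
  ultimately show ?thesis using interior_maximal by blast
qed

lemma hconvex_small_circle_meets_interior:
  assumes F: "F \<subseteq> disc" "hconvex F" "interior F \<noteq> {}"
    and c: "cmod c < 1" "c \<in> F" "c \<notin> interior F" and r: "0 < r"
  obtains \<rho> \<nu> where "0 < \<rho>" "\<rho> < r" "cmod \<nu> = 1"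
    "from0 c (complex_of_real \<rho> * \<nu>) \<in> interior F"
proof -
  obtain z0 where z0: "z0 \<in> interior F" using F(3) by blast
  define w0 where "w0 = to0 c z0"
  have "cmod z0 < 1" using z0 interior_subset F(1) by (auto simp: disc_def)
  then have w0: "cmod w0 < 1" "from0 c w0 = z0" unfolding w0_def using to0_in_disc from0_to0_cancel c(1) by auto
  then have "0 < cmod w0" using z0 c(3) by auto
  define \<rho> where "\<rho> = min r (cmod w0) / 2"
  have \<rho>: "0 < \<rho>" "\<rho> < r" "\<rho> < cmod w0"
    unfolding \<rho>_def using r \<open>0 < cmod w0\<close> by (auto simp: min_def simp del: zero_less_norm_iff)
  have "0 < \<rho> / cmod w0" "\<rho> / cmod w0 \<le> 1"
    using \<rho>(1,3) \<open>0 < cmod w0\<close> by (simp_all add: divide_le_eq_1 zero_less_divide_iff)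
  then have "from0 c (complex_of_real (\<rho> / cmod w0) * w0) \<in> interior F"
    by (intro hconvex_interior_radial[OF F(2) c(2,1) w0(1)]) (use w0(2) z0 in auto)
  moreover have "complex_of_real (\<rho> / cmod w0) * w0 = complex_of_real \<rho> * (w0 / complex_of_real (cmod w0))"
    by simp
  moreover have "cmod (w0 / complex_of_real (cmod w0)) = 1" using \<open>0 < cmod w0\<close> by (simp add: norm_divide)
  ultimately show ?thesis using that \<rho>(1,2) by metis
qed

lemma connected_path_in_interior:
  assumes J: "connected J" and P: "continuous_on J P" and nf: "\<forall>t\<in>J. P t \<notin> frontier F"
    and t0: "t0 \<in> J" "P t0 \<in> interior F" and t: "t \<in> J"
  shows "P t \<in> interior F"
proof (rule ccontr)
  assume "P t \<notin> interior F"
  then have "P ` J \<inter> frontier (interior F) \<noteq> {}"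
    using connected_Int_frontier[OF connected_continuous_image[OF P J]] t0 t by blast
  then show False using nf frontier_interior_subset by blast
qed

lemma arc_between_sides_in_interior:
  fixes P :: "real \<Rightarrow> complex"
  assumes P: "continuous_on UNIV P" and \<alpha>: "0 < \<alpha>" "\<alpha> < pi"
    and nf: "\<And>t. 0 < t \<Longrightarrow> t < 2 * pi \<Longrightarrow> t \<noteq> \<alpha> \<Longrightarrow> P t \<notin> frontier F"
    and ends: "P 0 \<in> frontier F" "P \<alpha> \<in> frontier F"
    and ts: "0 \<le> ts" "ts < 2 * pi" "P ts \<in> interior F"
    and rotate: "T (P pi) = P (pi + \<alpha>)" and disj: "T ` interior F \<inter> interior F = {}"
  shows "P (\<alpha> / 2) \<in> interior F"
proof -
  have "ts \<noteq> 0" "ts \<noteq> \<alpha>" using ts(3) ends frontier_def by auto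
  have arc: "P t \<in> interior F"
    if "a < ts" "ts < b" "a < t" "t < b" "\<forall>t\<in>{a<..<b}. P t \<notin> frontier F" for a b t
  proof (rule connected_path_in_interior[of "{a<..<b}" P F ts t])
    show "continuous_on {a<..<b} P" using P by (rule continuous_on_subset) simp
  qed (use that ts(3) in auto)
  show ?thesis
  proof (cases "ts < \<alpha>")
    case True
    have "\<forall>t\<in>{0<..<\<alpha>}. P t \<notin> frontier F"
    proof
      fix t assume "t \<in> {0<..<\<alpha>}"
      then show "P t \<notin> frontier F" using \<alpha> by (intro nf) auto
    qed
    then show ?thesis using True ts(1) \<open>ts \<noteq> 0\<close> \<alpha> by (intro arc) auto
  next
    case False
    have "\<forall>t\<in>{\<alpha><..<2 * pi}. P t \<notin> frontier F"
    proof
      fix t assume "t \<in> {\<alpha><..<2 * pi}"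
      then show "P t \<notin> frontier F" using \<alpha> by (intro nf) auto
    qed
    then have "P pi \<in> interior F" "P (pi + \<alpha>) \<in> interior F"
      using False ts(2) \<open>ts \<noteq> \<alpha>\<close> \<alpha> by (auto intro!: arc)
    then have "T (P pi) \<in> T ` interior F \<inter> interior F" using rotate imageI[of "P pi" _ T] by simp
    then show ?thesis using disj by simp
  qed
qed

section \<open>Vertices with odd stabiliser\<close>

definition orbit_interior :: "(complex \<Rightarrow> complex) set \<Rightarrow> complex set \<Rightarrow> complex set" where
  "orbit_interior G F = (\<Union>g\<in>G. g ` interior F)"

lemma odd_stabiliser_line_transfer:
  assumes G: "disc_group G" and c: "cmod c < 1"
    and card: "card {g\<in>G. g c = c} = m" and odd: "odd m" and ang: "hangle c q q' = pi / real m"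
    and meet: "hline c q \<inter> orbit_interior G F \<noteq> {}"
  shows "hline c q' \<inter> orbit_interior G F \<noteq> {}"
proof -
  define a b where "a = to0 c q" and "b = to0 c q'"
  have m: "m \<ge> 1" using odd by (cases m) auto
  have "pi / real m \<noteq> pi / 2" using odd by (auto simp: divide_eq_eq)
  then have ab: "a \<noteq> 0" "b \<noteq> 0" using hangle_degenerate ang unfolding a_def b_def by metis+
  obtain sg :: real where sg: "sg = 1 \<or> sg = -1"
    and b: "b = complex_of_real (cmod b / cmod a) * cis (sg * (pi / real m)) * a"
    using hangle_direction[of c q q'] ab ang unfolding a_def b_def by metis
  define z where "z = - cis (sg * (pi / real m))"
  have "cis (sg * (pi / real m)) ^ m = cis (sg * pi)" unfolding Complex.DeMoivre using m by simp
  then have "z ^ m = 1" using odd cis_sign_pi[OF sg] by (simp add: z_def power_minus_odd)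
  then obtain g where g: "g \<in> G" "rotation_about c z g"
    using stabiliser_contains_rotation[OF G c card m] by blast
  obtain h x where h: "h \<in> G" "x \<in> h ` interior F" and x: "x \<in> hline c q"
    using meet unfolding orbit_interior_def by blast
  obtain t where t: "cmod (complex_of_real t * a) < 1" and xt: "x = from0 c (complex_of_real t * a)"
    using x unfolding hline_def a_def by blast
  have "z * (complex_of_real t * a) = complex_of_real (- t * cmod a / cmod b) * b"
    using ab by (subst b) (simp add: z_def field_simps)
  moreover have "cmod z = 1" by (simp add: z_def)
  ultimately have "g x = from0 c (complex_of_real (- t * cmod a / cmod b) * b)"
    and "cmod (complex_of_real (- t * cmod a / cmod b) * b) < 1"
    using g(2) t unfolding xt rotation_about_def by (metis norm_mult mult_1)+
  then have "g x \<in> hline c q'" unfolding hline_def b_def by blast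
  moreover have "g x \<in> (g \<circ> h) ` interior F" "g \<circ> h \<in> G"
    using h g G unfolding disc_group_def by auto
  ultimately show ?thesis unfolding orbit_interior_def by blast
qed

lemma rotation_vertex_bisector_in_interior:
  assumes rot: "rotation_about c (cis (sg * \<alpha>)) T" and sg: "sg = 1 \<or> sg = -1"
    and \<alpha>: "0 < \<alpha>" "\<alpha> < pi" and c: "cmod c < 1" and u: "cmod u < 1" "u \<noteq> 0"
    and F: "F \<subseteq> disc" "closed F" "hconvex F" "interior F \<noteq> {}"
    and K: "closed K" "c \<notin> K"
    and fr: "frontier F \<subseteq> hseg c (from0 c u) \<union> hseg c (from0 c (cis (sg * \<alpha>) * u)) \<union> K"
    and sides: "hseg c (from0 c u) \<union> hseg c (from0 c (cis (sg * \<alpha>) * u)) \<subseteq> frontier F"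
    and disj: "T ` interior F \<inter> interior F = {}"
  obtains s where "0 < s" "s \<le> 1" "from0 c (complex_of_real s * cis (sg * (\<alpha> / 2)) * u) \<in> interior F"
proof -
  have "c \<in> hseg c (from0 c u)" using from0_mem_hseg_iff[OF c u(1), of 0] by force
  then have "c \<in> frontier F" using sides by blast
  then have cF: "c \<in> F" "c \<notin> interior F"
    using F(2) frontier_subset_closed by (auto simp: frontier_def)
  have "open (ball 0 1 \<inter> from0 c -` (- K))" "0 \<in> ball 0 1 \<inter> from0 c -` (- K)"
    using continuous_open_preimage[OF from0_continuous_on[OF c]] K by auto
  then obtain r0 where r0: "r0 > 0" "ball 0 r0 \<subseteq> ball 0 1 \<inter> from0 c -` (- K)"
    using open_contains_ball by blast
  then have "0 < min r0 (cmod u)" using u by simp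
  then obtain \<rho> \<nu> where \<rho>: "0 < \<rho>" "\<rho> < min r0 (cmod u)"
    and \<nu>: "cmod \<nu> = 1" "from0 c (complex_of_real \<rho> * \<nu>) \<in> interior F"
    by (rule hconvex_small_circle_meets_interior[OF F(1,3,4) c cF])
  define s where "s = \<rho> / cmod u"
  have s: "0 < s" "s \<le> 1" using \<rho> u by (auto simp: s_def)
  define P where "P t = from0 c (complex_of_real s * cis (sg * t) * u)" for t
  have Pn: "cmod (complex_of_real s * cis (sg * t) * u) = \<rho>" for t
    using \<rho> u by (simp add: s_def norm_mult norm_divide)
  have "cmod (\<nu> * complex_of_real (cmod u) / u) = 1" using \<nu> u by (simp add: norm_mult norm_divide)
  then obtain ts where ts: "0 \<le> ts" "ts < 2 * pi" and "\<nu> * complex_of_real (cmod u) / u = cis (sg * ts)"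
    using unit_eq_cis_param sg by metis
  then have "complex_of_real s * cis (sg * ts) * u = complex_of_real \<rho> * \<nu>"
    using u by (simp add: s_def field_simps)
  then have P_ts: "P ts \<in> interior F" using \<nu> by (simp add: P_def)
  have nf: "P t \<notin> frontier F" if "0 < t" "t < 2 * pi" "t \<noteq> \<alpha>" for t
  proof -
    have "P t \<notin> K" using r0(2) Pn \<rho> by (force simp: P_def)
    then show ?thesis
      using fr from0_circle_not_mem_sides[OF c u s sg \<alpha> that] unfolding P_def by blast
  qed
  have "P 0 \<in> hseg c (from0 c u)" "P \<alpha> \<in> hseg c (from0 c (cis (sg * \<alpha>) * u))"
    using from0_mem_hseg_iff[OF c] u s cmod_scale_less_1[of s] by (auto simp: P_def norm_mult mult.assoc)
  then have ends: "P 0 \<in> frontier F" "P \<alpha> \<in> frontier F" using sides by auto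
  have "T (P pi) = P (pi + \<alpha>)"
    using rot Pn \<rho> u unfolding P_def rotation_about_def
    by (simp add: algebra_simps cis_mult[symmetric])
  moreover have "continuous_on UNIV P"
    unfolding P_def using Pn \<rho> u
    by (intro continuous_on_compose2[OF from0_continuous_on[OF c]] continuous_intros) auto
  ultimately have "P (\<alpha> / 2) \<in> interior F"
    using arc_between_sides_in_interior[OF _ \<alpha> nf ends ts P_ts _ disj] by blast
  then show ?thesis using that s unfolding P_def by blast
qed

lemma rotation_about_odd_half_turn:
  assumes rot: "rotation_about c (cis (sg * (2 * pi / real m))) T" and sg: "sg = 1 \<or> sg = -1"
    and odd: "odd m" and w: "cmod w < 1"
  shows "(T ^^ (m div 2 + j)) (from0 c (cis (sg * (pi / real m)) * w))
    = from0 c (- (cis (sg * (2 * pi / real m)) ^ j * w))"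
proof -
  define k where "k = m div 2"
  define \<omega> where "\<omega> = cis (sg * (2 * pi / real m))"
  have m: "m = 2 * k + 1" using odd unfolding k_def by presburger
  have "real k * (sg * (2 * pi / real m)) + sg * (pi / real m) = sg * (pi / real m) * (2 * real k + 1)"
    by (simp add: algebra_simps)
  also have "\<dots> = sg * pi" using m by (simp add: field_simps)
  finally have turn: "\<omega> ^ k * cis (sg * (pi / real m)) = -1"
    unfolding \<omega>_def Complex.DeMoivre cis_mult using cis_sign_pi[OF sg] by simp
  have "\<omega> ^ (k + j) * (cis (sg * (pi / real m)) * w) = \<omega> ^ j * (\<omega> ^ k * cis (sg * (pi / real m))) * w"
    by (simp add: power_add mult_ac)
  also have "\<dots> = - (\<omega> ^ j * w)" unfolding turn by simp
  finally have "\<omega> ^ (k + j) * (cis (sg * (pi / real m)) * w) = - (\<omega> ^ j * w)" .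
  moreover have "cmod (cis (sg * (pi / real m)) * w) < 1" using w by (simp add: norm_mult)
  ultimately show ?thesis
    using rotation_about_funpow[OF rot[folded \<omega>_def], of "k + j"]
    unfolding rotation_about_def k_def[symmetric] \<omega>_def[symmetric] by simp
qed

lemma odd_rotation_bisector_lines_meet:
  assumes G: "disc_group G" and TG: "T \<in> G" and c: "cmod c < 1"
    and rot: "rotation_about c (cis (sg * (2 * pi / real m))) T" and sg: "sg = 1 \<or> sg = -1"
    and odd: "odd m" and u: "cmod u < 1" and s: "0 < s" "s \<le> 1"
    and mid: "from0 c (cis (sg * (pi / real m)) * (complex_of_real s * u)) \<in> interior F"
  shows "hline c (from0 c u) \<inter> orbit_interior G F \<noteq> {}"
    and "hline c (from0 c (cis (sg * (2 * pi / real m)) * u)) \<inter> orbit_interior G F \<noteq> {}"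
proof -
  define \<omega> where "\<omega> = cis (sg * (2 * pi / real m))"
  define x where "x = from0 c (cis (sg * (pi / real m)) * (complex_of_real s * u))"
  have su0: "cmod (complex_of_real s * u) < 1" using cmod_scale_less_1[OF _ s(2) u] s(1) by simp
  have turn: "(T ^^ (m div 2 + j)) x = from0 c (complex_of_real (- s) * (\<omega> ^ j * u))" for j
    using rotation_about_odd_half_turn[OF rot sg odd su0, of j] unfolding x_def \<omega>_def by (simp add: mult_ac)
  have \<omega>u: "cmod (\<omega> * u) < 1" using u by (simp add: \<omega>_def norm_mult)
  have su: "cmod (complex_of_real (- s) * u) < 1" "cmod (complex_of_real (- s) * (\<omega> * u)) < 1"
    using cmod_scale_less_1[OF _ s(2) u] cmod_scale_less_1[OF _ s(2) \<omega>u] s(1) by (simp_all add: norm_mult)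
  have "(T ^^ (m div 2)) x \<in> hline c (from0 c u)" "(T ^^ (m div 2 + 1)) x \<in> hline c (from0 c (\<omega> * u))"
    using turn[of 0] turn[of 1] su unfolding hline_def to0_from0_cancel[OF c u] to0_from0_cancel[OF c \<omega>u]
    by (auto intro!: exI[of _ "- s"])
  moreover have "T ^^ n \<in> G" for n using disc_group_funpow[OF G TG] .
  ultimately show "hline c (from0 c u) \<inter> orbit_interior G F \<noteq> {}"
    and "hline c (from0 c (cis (sg * (2 * pi / real m)) * u)) \<inter> orbit_interior G F \<noteq> {}"
    using mid unfolding orbit_interior_def x_def \<omega>_def by blast+
qed

lemma odd_rotation_vertex_lines_meet:
  assumes G: "disc_group G" and TG: "T \<in> G" and c: "cmod c < 1" and q: "cmod q < 1"
    and Tc: "T c = c" and ang: "hangle c q (T q) = 2 * pi / real m" and odd: "odd m" and m: "m \<ge> 2"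
    and F: "F \<subseteq> disc" "closed F" "hconvex F" "interior F \<noteq> {}"
    and K: "closed K" "c \<notin> K"
    and fr: "frontier F \<subseteq> hseg c q \<union> hseg c (T q) \<union> K"
    and sides: "hseg c q \<union> hseg c (T q) \<subseteq> frontier F"
    and disj: "\<forall>g\<in>G. g \<noteq> id \<longrightarrow> g ` interior F \<inter> interior F = {}"
  shows "hline c q \<inter> orbit_interior G F \<noteq> {} \<and> hline c (T q) \<inter> orbit_interior G F \<noteq> {}"
proof -
  define \<alpha> where "\<alpha> = 2 * pi / real m"
  have "m \<ge> 3" using odd m by presburger
  then have \<alpha>: "0 < \<alpha>" "\<alpha> < pi" by (auto simp: \<alpha>_def divide_less_eq)
  obtain \<omega> where rot: "rotation_about c \<omega> T"
    using disc_aut_fixing_rotation G TG c Tc unfolding disc_group_def by blast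
  define u where "u = to0 c q"
  have u: "cmod u < 1" "q = from0 c u" unfolding u_def using to0_in_disc from0_to0_cancel c q by auto
  have Tq: "T q = from0 c (\<omega> * u)" using rotation_about_apply[OF rot c q] u_def by simp
  have "\<alpha> \<noteq> pi / 2" using odd by (auto simp: \<alpha>_def divide_eq_eq)
  then have "q \<noteq> c" using hangle_degenerate ang unfolding \<alpha>_def by (metis to0_def diff_self div_0)
  then have "u \<noteq> 0" using u by auto
  obtain sg :: real where sg: "sg = 1 \<or> sg = -1" and \<omega>: "\<omega> = cis (sg * \<alpha>)"
    using rotation_about_eq_cis_hangle[OF rot c q \<open>q \<noteq> c\<close>] ang unfolding \<alpha>_def by metis
  then have "\<omega> \<noteq> 1" using cis_eq_nonneg_real_imp_zero[of "sg * \<alpha>" 1] \<alpha> by auto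
  then have "T ` interior F \<inter> interior F = {}" using rotation_about_ne_id[OF c rot] disj TG by blast
  moreover have "frontier F \<subseteq> hseg c (from0 c u) \<union> hseg c (from0 c (cis (sg * \<alpha>) * u)) \<union> K"
    and "hseg c (from0 c u) \<union> hseg c (from0 c (cis (sg * \<alpha>) * u)) \<subseteq> frontier F"
    using fr sides unfolding Tq \<omega> unfolding u(2) by auto
  ultimately obtain s where s: "0 < s" "s \<le> 1"
    and "from0 c (complex_of_real s * cis (sg * (\<alpha> / 2)) * u) \<in> interior F"
    using rotation_vertex_bisector_in_interior[OF rot[unfolded \<omega>] sg \<alpha> c u(1) \<open>u \<noteq> 0\<close> F K] by blast
  then have "from0 c (cis (sg * (pi / real m)) * (complex_of_real s * u)) \<in> interior F"
    unfolding \<alpha>_def by (simp add: mult_ac)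
  from odd_rotation_bisector_lines_meet[OF G TG c rot[unfolded \<omega> \<alpha>_def] sg odd u(1) s this]
  show ?thesis unfolding Tq \<omega> \<alpha>_def unfolding u(2) by blast
qed

lemma quadrilateral_odd_vertex_lines_meet:
  assumes G: "disc_group G" and TG: "T \<in> G"
    and vs: "cmod q < 1" "cmod c < 1" "cmod q' < 1" "cmod x < 1"
    and Tc: "T c = c" and Tq: "T q = q'" and ang: "hangle c q q' = 2 * pi / real m"
    and odd: "odd m" and m: "m \<ge> 2"
    and F: "F \<subseteq> disc" "closed F" "hconvex F" "interior F \<noteq> {}"
    and fr: "frontier F = hseg q c \<union> hseg c q' \<union> hseg q' x \<union> hseg x q"
    and nondeg: "hangle q c x \<noteq> 0" "hangle q' c x \<noteq> 0"
    and disj: "\<forall>g\<in>G. g \<noteq> id \<longrightarrow> g ` interior F \<inter> interior F = {}"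
  shows "hline c q \<inter> orbit_interior G F \<noteq> {} \<and> hline c q' \<inter> orbit_interior G F \<noteq> {}"
proof -
  have "2 * pi / real m \<noteq> pi / 2" using odd by (auto simp: divide_eq_eq)
  then have "c \<noteq> q" "c \<noteq> q'" using hangle_degenerate[of c q q'] ang by (auto simp: to0_def)
  then have "c \<notin> hseg q' x" "c \<notin> hseg x q"
    using hangle_mem_hseg[OF vs(3,4)] hangle_mem_hseg[OF vs(1,4)] hseg_commute[OF vs(4,1)]
      hangle_commute nondeg by metis+
  moreover have "closed (hseg q' x \<union> hseg x q)" using closed_hseg vs by auto
  moreover have "hseg q c = hseg c q" using hseg_commute vs by auto
  ultimately show ?thesis
    using odd_rotation_vertex_lines_meet[OF G TG vs(2,1) Tc _ odd m F, of "hseg q' x \<union> hseg x q"]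
      Tq ang fr disj by auto
qed

theorem lemma4p1:
  fixes G :: "(complex \<Rightarrow> complex) set"
    and A B T1 T2 T3 T4 :: "complex \<Rightarrow> complex"
    and m1 m2 m3 :: nat
    and F :: "complex set"
    and v1 v2 v3 v4 :: complex
  assumes m_ge: "m1 \<ge> 2" "m2 \<ge> 2" "m3 \<ge> 2"
    and hyp: "1 / real m1 + 1 / real m2 + 1 / real m3 < 1"
    and fuchs: "fuchsian G" and cocpt: "cocompact G"
    and pres: "generated_by G A B" "A ^^ m1 = id" "B ^^ m2 = id" "(A \<circ> B) ^^ m3 = id"
    and fd: "fundamental_domain G F"
    and quad: "compact F" "hconvex F" "{v1, v2, v3, v4} \<subseteq> disc"
      "frontier F = hseg v1 v2 \<union> hseg v2 v3 \<union> hseg v3 v4 \<union> hseg v4 v1"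
    and angles: "hangle v1 v4 v2 = pi / real m3" "hangle v2 v1 v3 = 2 * pi / real m2"
      "hangle v3 v2 v4 = pi / real m3" "hangle v4 v3 v1 = 2 * pi / real m1"
    and pairing: "{T1, T2, T3, T4} \<subseteq> G"
      "T1 ` hseg v1 v2 = hseg v2 v3" "T2 ` hseg v2 v3 = hseg v1 v2"
      "T3 ` hseg v3 v4 = hseg v4 v1" "T4 ` hseg v4 v1 = hseg v3 v4"
      "T1 v1 = v3" "T3 v3 = v1" "T2 v2 = v2" "T4 v4 = v4"
      "T2 \<circ> T1 = id" "T1 \<circ> T2 = id" "T4 \<circ> T3 = id" "T3 \<circ> T4 = id"
    and stab: "card {g\<in>G. g v1 = v1} = m3" "card {g\<in>G. g v3 = v3} = m3"
      "card {g\<in>G. g v2 = v2} = m2" "card {g\<in>G. g v4 = v4} = m1"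
    and odd2: "(odd m1 \<and> odd m2) \<or> (odd m1 \<and> odd m3) \<or> (odd m2 \<and> odd m3)"
  shows "\<forall>(p, q) \<in> {(v1, v2), (v2, v3), (v3, v4), (v4, v1)}.
           hline p q \<inter> (\<Union>g\<in>G. g ` interior F) \<noteq> {}"
proof -
  have G: "disc_group G" using fuchs by (simp add: fuchsian_def)
  have vs: "cmod v1 < 1" "cmod v2 < 1" "cmod v3 < 1" "cmod v4 < 1" using quad(3) by (auto simp: disc_def)
  have F: "F \<subseteq> disc" "closed F" "interior F \<noteq> {}"
    and disj: "\<forall>g\<in>G. g \<noteq> id \<longrightarrow> g ` interior F \<inter> interior F = {}"
    using fd by (auto simp: fundamental_domain_def)
  have T: "T1 \<in> G" "T1 v2 = v2" "T3 \<in> G" "T3 v4 = v4"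
    using pairing(1,8,9,11,13) by (auto, metis comp_apply id_apply, metis comp_apply id_apply)
  have "pi / real m3 \<noteq> 0" using m_ge by simp
  then have nondeg: "hangle v1 v2 v4 \<noteq> 0" "hangle v3 v2 v4 \<noteq> 0"
    "hangle v3 v4 v2 \<noteq> 0" "hangle v1 v4 v2 \<noteq> 0"
    using angles(1,3) hangle_commute by metis+
  have at_v2: "odd m2 \<Longrightarrow>
      hline v2 v1 \<inter> orbit_interior G F \<noteq> {} \<and> hline v2 v3 \<inter> orbit_interior G F \<noteq> {}"
    using quadrilateral_odd_vertex_lines_meet[OF G T(1) vs T(2) pairing(6) angles(2) _ m_ge(2)
        F(1,2) quad(2) F(3) quad(4) nondeg(1,2) disj] .
  have at_v4: "odd m1 \<Longrightarrow>
      hline v4 v3 \<inter> orbit_interior G F \<noteq> {} \<and> hline v4 v1 \<inter> orbit_interior G F \<noteq> {}"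
    using quadrilateral_odd_vertex_lines_meet[OF G T(3) vs(3,4,1,2) T(4) pairing(7) angles(4) _ m_ge(1)
        F(1,2) quad(2) F(3) _ nondeg(3,4) disj] quad(4) by (simp add: Un_ac)
  have at_v1: "odd m3 \<Longrightarrow>
      hline v1 v2 \<inter> orbit_interior G F \<noteq> {} \<longleftrightarrow> hline v1 v4 \<inter> orbit_interior G F \<noteq> {}"
    using odd_stabiliser_line_transfer[OF G vs(1) stab(1)] angles(1) hangle_commute by metis
  have at_v3: "odd m3 \<Longrightarrow>
      hline v3 v2 \<inter> orbit_interior G F \<noteq> {} \<longleftrightarrow> hline v3 v4 \<inter> orbit_interior G F \<noteq> {}"
    using odd_stabiliser_line_transfer[OF G vs(3) stab(2)] angles(3) hangle_commute by metis
  have "hline v1 v2 = hline v2 v1" "hline v3 v2 = hline v2 v3" "hline v3 v4 = hline v4 v3"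
    "hline v1 v4 = hline v4 v1"
    using hline_commute vs by auto
  then show ?thesis using odd2 at_v1 at_v2 at_v3 at_v4 unfolding orbit_interior_def by auto
qed

end
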